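(* Let $d\ge2$ and $r\ge 2$ be integers and let $G$ be a $d$-regular graph on $n$ vertices. Suppose each vertex is chosen as a seed independently with probability at most $1/4$. Then with probability $1-o(1)$ (as $n\to\infty$), it is not the case that all vertices become active within $\log_d\log n$ generations of threshold-$r$ bootstrap percolation; i.e., $A_t\neq V$ for $t=\lfloor\log_d\log n\rfloor$.
   Context: Bootstrap percolation with threshold $r\ge 2$ on a graph $G=(V,E)$: given a set $A_0\subseteq V$ of seeds, define for $i\ge1$ $A_i=A_{i-1}\cup\{v:|N(v)\cap A_{i-1}|\ge r\}$, where $N(v)$ is the set of neighbors of $v$. The number of generations until complete activation is the least $t$ with $A_t=V$. Logarithms are base 2 unless a base is indicated. *)

theory Defs
  imports Complex_Main
begin

definition simple_graph_on :: "nat \<Rightarrow> (nat \<Rightarrow> nat \<Rightarrow> bool) \<Rightarrow> bool" where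
  "simple_graph_on n E \<longleftrightarrow> (\<forall>u v. E u v \<longrightarrow> E v u) \<and> (\<forall>v. \<not> E v v)"

definition nbrs :: "nat \<Rightarrow> (nat \<Rightarrow> nat \<Rightarrow> bool) \<Rightarrow> nat \<Rightarrow> nat set" where
  "nbrs n E v = {u. u < n \<and> E v u}"

definition regular_graph :: "nat \<Rightarrow> nat \<Rightarrow> (nat \<Rightarrow> nat \<Rightarrow> bool) \<Rightarrow> bool" where
  "regular_graph d n E \<longleftrightarrow> simple_graph_on n E \<and> (\<forall>v<n. card (nbrs n E v) = d)"

definition bp_step :: "nat \<Rightarrow> (nat \<Rightarrow> nat \<Rightarrow> bool) \<Rightarrow> nat \<Rightarrow> nat set \<Rightarrow> nat set" where
  "bp_step n E r A = A \<union> {v. v < n \<and> card (nbrs n E v \<inter> A) \<ge> r}"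

definition bp_gen :: "nat \<Rightarrow> (nat \<Rightarrow> nat \<Rightarrow> bool) \<Rightarrow> nat \<Rightarrow> nat \<Rightarrow> nat set \<Rightarrow> nat set" where
  "bp_gen n E r t A0 = (bp_step n E r ^^ t) A0"

text \<open>Probability that the random seed set A_0 \<subseteq> {0..<n}, where each vertex v is included
  independently with probability p v, satisfies the event P.\<close>

definition seed_prob :: "nat \<Rightarrow> (nat \<Rightarrow> real) \<Rightarrow> (nat set \<Rightarrow> bool) \<Rightarrow> real" where
  "seed_prob n p P =
     (\<Sum>S\<in>Pow {0..<n}. if P S then (\<Prod>v\<in>S. p v) * (\<Prod>v\<in>{0..<n} - S. 1 - p v) else 0)"

end

theory Submission
  imports Defs "HOL-Real_Asymp.Real_Asymp"
begin

text \<open>A vertex active after t rounds must have a seed within distance t, since with threshold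
  at least 1 activation only spreads along edges. Put L = log_2 n. For t = floor (log_d L) every
  ball of radius t has at most 2 d^t \<le> 2L vertices, so a greedy choice yields at least
  n / (2L)^2 centres with pairwise disjoint balls. Each of these balls is seedless with probability
  at least (3/4)^(2L) \<ge> n^(-9/10), independently, so complete activation has probability at most
  exp (- n^(1/10) / (4 L^2)).\<close>

section \<open>Independent random subsets\<close>

definition indep_weight :: "'a set \<Rightarrow> ('a \<Rightarrow> real) \<Rightarrow> 'a set \<Rightarrow> real" where
  "indep_weight I p S = (\<Prod>v\<in>S. p v) * (\<Prod>v\<in>I - S. 1 - p v)"

definition indep_prob :: "'a set \<Rightarrow> ('a \<Rightarrow> real) \<Rightarrow> ('a set \<Rightarrow> bool) \<Rightarrow> real" where
  "indep_prob I p P = (\<Sum>S\<in>Pow I. if P S then indep_weight I p S else 0)"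

lemma seed_prob_eq_indep_prob: "seed_prob n p P = indep_prob {0..<n} p P"
  unfolding seed_prob_def indep_prob_def indep_weight_def ..

lemma indep_prob_cong: "(\<And>S. S \<subseteq> I \<Longrightarrow> P S = Q S) \<Longrightarrow> indep_prob I p P = indep_prob I p Q"
  unfolding indep_prob_def by (rule sum.cong) auto

lemma indep_prob_mono:
  assumes "\<And>v. v \<in> I \<Longrightarrow> 0 \<le> p v \<and> p v \<le> 1" and "\<And>S. S \<subseteq> I \<Longrightarrow> P S \<Longrightarrow> Q S"
  shows "indep_prob I p P \<le> indep_prob I p Q"
  unfolding indep_prob_def
proof (rule sum_mono)
  fix S assume S: "S \<in> Pow I"
  have "0 \<le> indep_weight I p S"
    unfolding indep_weight_def using assms(1) S by (intro mult_nonneg_nonneg prod_nonneg) auto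
  then show "(if P S then indep_weight I p S else 0) \<le> (if Q S then indep_weight I p S else 0)"
    using assms(2) S by auto
qed

lemma indep_prob_True: "finite I \<Longrightarrow> indep_prob I p (\<lambda>_. True) = 1"
  using prod_add[of I p "\<lambda>v. 1 - p v"] by (simp add: indep_prob_def indep_weight_def)

lemma indep_prob_nonempty:
  assumes "finite I"
  shows "indep_prob I p (\<lambda>S. S \<noteq> {}) = 1 - (\<Prod>v\<in>I. 1 - p v)"
proof -
  have "indep_prob I p (\<lambda>S. S \<noteq> {}) + indep_weight I p {} = indep_prob I p (\<lambda>_. True)"
    unfolding indep_prob_def using assms
    by (simp add: sum.If_cases Int_absorb1 sum.remove[of "Pow I" "{}"] Diff_eq) (rule sum.cong; auto)
  then show ?thesis using indep_prob_True[OF assms] by (simp add: indep_weight_def)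
qed

lemma indep_weight_split:
  assumes "finite I" "B \<subseteq> I" "S \<subseteq> I"
  shows "indep_weight I p S = indep_weight B p (S \<inter> B) * indep_weight (I - B) p (S - B)"
proof -
  have "(\<Prod>v\<in>S. p v) = (\<Prod>v\<in>S \<inter> B. p v) * (\<Prod>v\<in>S - B. p v)"
    using prod.Int_Diff assms finite_subset by blast
  moreover have "(\<Prod>v\<in>I - S. 1 - p v) = (\<Prod>v\<in>B - S \<inter> B. 1 - p v) * (\<Prod>v\<in>(I - B) - (S - B). 1 - p v)"
  proof -
    have "(I - S) \<inter> B = B - S \<inter> B" "(I - S) - B = (I - B) - (S - B)" using assms by auto
    then show ?thesis using prod.Int_Diff[of "I - S" _ B] assms by simp
  qed
  ultimately show ?thesis unfolding indep_weight_def by (simp add: algebra_simps)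
qed

lemma indep_prob_split:
  assumes "finite I" "B \<subseteq> I"
  shows "indep_prob I p (\<lambda>S. F (S \<inter> B) \<and> G (S - B)) = indep_prob B p F * indep_prob (I - B) p G"
proof -
  let ?w = "\<lambda>J P S. if P S then indep_weight J p S else 0"
  have bij: "bij_betw (\<lambda>(X, Y). X \<union> Y) (Pow B \<times> Pow (I - B)) (Pow I)"
    by (rule bij_betw_byWitness[where f' = "\<lambda>S. (S \<inter> B, S - B)"]) (use assms(2) in auto)
  have "indep_prob I p (\<lambda>S. F (S \<inter> B) \<and> G (S - B))
      = (\<Sum>(X, Y)\<in>Pow B \<times> Pow (I - B). ?w I (\<lambda>S. F (S \<inter> B) \<and> G (S - B)) (X \<union> Y))"
    unfolding indep_prob_def sum.reindex_bij_betw[OF bij, symmetric] by (intro sum.cong) auto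
  also have "\<dots> = (\<Sum>(X, Y)\<in>Pow B \<times> Pow (I - B). ?w B F X * ?w (I - B) G Y)"
  proof (rule sum.cong[OF refl], clarify)
    fix X Y assume XY: "X \<subseteq> B" "Y \<subseteq> I - B"
    then have "(X \<union> Y) \<inter> B = X" "(X \<union> Y) - B = Y" "X \<union> Y \<subseteq> I" using assms(2) by auto
    then show "?w I (\<lambda>S. F (S \<inter> B) \<and> G (S - B)) (X \<union> Y) = ?w B F X * ?w (I - B) G Y"
      using indep_weight_split[OF assms, of "X \<union> Y" p] by simp
  qed
  also have "\<dots> = indep_prob B p F * indep_prob (I - B) p G"
    unfolding indep_prob_def sum_product by (rule sum.cartesian_product[symmetric])
  finally show ?thesis .
qed

lemma indep_prob_hits_disjoint_blocks:
  assumes "finite K" "finite I" "\<forall>c\<in>K. B c \<subseteq> I" "pairwise (\<lambda>a b. disjnt (B a) (B b)) K"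
  shows "indep_prob I p (\<lambda>S. \<forall>c\<in>K. S \<inter> B c \<noteq> {}) = (\<Prod>c\<in>K. 1 - (\<Prod>u\<in>B c. 1 - p u))"
  using assms
proof (induction K arbitrary: I rule: finite_induct)
  case empty
  then show ?case by (simp add: indep_prob_True)
next
  case (insert c K)
  have disj: "disjnt (B c) (B c')" if "c' \<in> K" for c'
    using insert.prems(3) insert.hyps(2) that by (auto simp: pairwise_def)
  have "indep_prob I p (\<lambda>S. \<forall>c'\<in>insert c K. S \<inter> B c' \<noteq> {})
      = indep_prob I p (\<lambda>S. S \<inter> B c \<noteq> {} \<and> (\<forall>c'\<in>K. (S - B c) \<inter> B c' \<noteq> {}))"
    by (rule indep_prob_cong) (use disj in \<open>simp add: disjnt_def, blast\<close>)
  also have "\<dots> = indep_prob (B c) p (\<lambda>T. T \<noteq> {}) * indep_prob (I - B c) p (\<lambda>S. \<forall>c'\<in>K. S \<inter> B c' \<noteq> {})"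
    using indep_prob_split[OF insert.prems(1), of "B c"] insert.prems(2) by simp
  also have "indep_prob (I - B c) p (\<lambda>S. \<forall>c'\<in>K. S \<inter> B c' \<noteq> {}) = (\<Prod>c\<in>K. 1 - (\<Prod>u\<in>B c. 1 - p u))"
    using insert.prems disj by (intro insert.IH) (auto simp: disjnt_def pairwise_insert)
  also have "indep_prob (B c) p (\<lambda>T. T \<noteq> {}) = 1 - (\<Prod>u\<in>B c. 1 - p u)"
    using insert.prems(1,2) by (intro indep_prob_nonempty) (auto intro: finite_subset)
  finally show ?case using insert.hyps by simp
qed

section \<open>Balls in a graph\<close>

fun graph_ball :: "nat \<Rightarrow> (nat \<Rightarrow> nat \<Rightarrow> bool) \<Rightarrow> nat \<Rightarrow> nat \<Rightarrow> nat set" where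
  "graph_ball n E v 0 = {v}"
| "graph_ball n E v (Suc t) = insert v (\<Union>w\<in>nbrs n E v. graph_ball n E w t)"

lemma graph_ball_center: "v \<in> graph_ball n E v t"
  by (cases t) auto

lemma graph_ball_subset_Suc: "graph_ball n E v t \<subseteq> graph_ball n E v (Suc t)"
  by (induction t arbitrary: v) fastforce+

lemma finite_nbrs: "finite (nbrs n E v)"
  unfolding nbrs_def by simp

lemma finite_graph_ball: "finite (graph_ball n E v t)"
  by (induction t arbitrary: v) (auto simp: finite_nbrs)

lemma graph_ball_subset: "v < n \<Longrightarrow> graph_ball n E v t \<subseteq> {0..<n}"
  by (induction t arbitrary: v) (auto simp: nbrs_def)

lemma graph_ball_Suc_nbr: "w \<in> graph_ball n E x t \<Longrightarrow> v \<in> nbrs n E w \<Longrightarrow> v \<in> graph_ball n E x (Suc t)"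
proof (induction t arbitrary: x)
  case (Suc t)
  then show ?case
    by (cases "w = x") (use graph_ball_center[of v n E "Suc t"] in fastforce)+
qed auto

lemma graph_ball_sym:
  assumes "simple_graph_on n E"
  shows "v < n \<Longrightarrow> x \<in> graph_ball n E v t \<Longrightarrow> v \<in> graph_ball n E x t"
proof (induction t arbitrary: v x)
  case (Suc t)
  show ?case
  proof (cases "x = v")
    case False
    then obtain w where w: "w \<in> nbrs n E v" "x \<in> graph_ball n E w t" using Suc.prems by auto
    then have "w \<in> graph_ball n E x t" using Suc.IH by (simp add: nbrs_def)
    moreover have "v \<in> nbrs n E w" using w Suc.prems assms by (auto simp: nbrs_def simple_graph_on_def)
    ultimately show ?thesis by (rule graph_ball_Suc_nbr)
  qed (simp add: graph_ball_center)
qed auto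

fun ball_card_bound :: "nat \<Rightarrow> nat \<Rightarrow> nat" where
  "ball_card_bound d 0 = 1"
| "ball_card_bound d (Suc t) = 1 + d * ball_card_bound d t"

lemma card_graph_ball_le:
  assumes "regular_graph d n E" "v < n"
  shows "card (graph_ball n E v t) \<le> ball_card_bound d t"
  using assms(2)
proof (induction t arbitrary: v)
  case (Suc t)
  have "card (graph_ball n E v (Suc t)) \<le> 1 + card (\<Union>w\<in>nbrs n E v. graph_ball n E w t)"
    by (simp add: card_insert_if finite_graph_ball finite_nbrs)
  also have "card (\<Union>w\<in>nbrs n E v. graph_ball n E w t) \<le> (\<Sum>w\<in>nbrs n E v. card (graph_ball n E w t))"
    by (rule card_UN_le[OF finite_nbrs])
  also have "\<dots> \<le> (\<Sum>w\<in>nbrs n E v. ball_card_bound d t)"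
    by (rule sum_mono) (use Suc.IH in \<open>auto simp: nbrs_def\<close>)
  also have "\<dots> = d * ball_card_bound d t"
    using assms(1) Suc.prems by (simp add: regular_graph_def)
  finally show ?case by simp
qed simp

lemma ball_card_bound_geometric: "e * ball_card_bound (Suc e) t + 1 = Suc e ^ Suc t"
proof (induction t)
  case (Suc t)
  have "e * ball_card_bound (Suc e) (Suc t) + 1 = Suc e * (e * ball_card_bound (Suc e) t + 1)"
    by (simp add: algebra_simps)
  also have "\<dots> = Suc e ^ Suc (Suc t)" using Suc.IH by simp
  finally show ?case .
qed simp

lemma ball_card_bound_le:
  assumes "d \<ge> 2"
  shows "ball_card_bound d t \<le> 2 * d ^ t"
proof -
  obtain e where e: "d = Suc e" "e \<ge> 1" using assms by (cases d) auto
  have "e * ball_card_bound d t < d * d ^ t" using ball_card_bound_geometric[of e t] e by simp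
  also have "\<dots> \<le> e * (2 * d ^ t)" using e by simp
  finally show ?thesis by simp
qed

section \<open>Activation needs a nearby seed\<close>

lemma bp_gen_Suc: "bp_gen n E r (Suc t) A = bp_step n E r (bp_gen n E r t A)"
  by (simp add: bp_gen_def)

lemma bp_gen_meets_seeds:
  assumes "r \<ge> 1" "u \<in> bp_gen n E r t S"
  shows "S \<inter> graph_ball n E u t \<noteq> {}"
  using assms(2)
proof (induction t arbitrary: u)
  case 0
  then show ?case by (simp add: bp_gen_def)
next
  case (Suc t)
  show ?case
  proof (cases "u \<in> bp_gen n E r t S")
    case True
    then show ?thesis using Suc.IH graph_ball_subset_Suc by blast
  next
    case False
    then have "r \<le> card (nbrs n E u \<inter> bp_gen n E r t S)"
      using Suc.prems by (auto simp: bp_gen_Suc bp_step_def)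
    then have "nbrs n E u \<inter> bp_gen n E r t S \<noteq> {}" using assms(1) by auto
    then obtain w where "w \<in> nbrs n E u" "w \<in> bp_gen n E r t S" by blast
    then show ?thesis using Suc.IH by auto
  qed
qed

section \<open>A packing of disjoint balls\<close>

lemma greedy_independent_subset:
  fixes R :: "'a \<Rightarrow> 'a \<Rightarrow> bool"
  assumes "finite V" "\<And>c. R c c" "\<And>a b. R a b \<Longrightarrow> R b a"
    and "\<And>c. c \<in> V \<Longrightarrow> card {v\<in>V. R c v} \<le> M"
  shows "\<exists>K\<subseteq>V. card V \<le> card K * M \<and> pairwise (\<lambda>a b. \<not> R a b) K"
  using assms(1,4)
proof (induction "card V" arbitrary: V rule: less_induct)
  case less
  show ?case
  proof (cases "V = {}")
    case False
    then obtain c where c: "c \<in> V" by blast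
    define C where "C = {v\<in>V. R c v}"
    have C: "c \<in> C" "C \<subseteq> V" "finite C" "card C \<le> M"
      using c assms(2) less.prems by (auto simp: C_def)
    then have card_V: "card V = card (V - C) + card C"
      using less.prems(1) by (simp add: card_Diff_subset card_mono)
    have "card {v\<in>V - C. R c' v} \<le> M" if c': "c' \<in> V - C" for c'
    proof -
      have "card {v\<in>V - C. R c' v} \<le> card {v\<in>V. R c' v}"
        using less.prems(1) by (intro card_mono) auto
      then show ?thesis using less.prems(2)[of c'] c' by simp
    qed
    moreover have "card (V - C) < card V"
      using C less.prems(1) by (intro psubset_card_mono) auto
    ultimately obtain K where K: "K \<subseteq> V - C" "card (V - C) \<le> card K * M" "pairwise (\<lambda>a b. \<not> R a b) K"
      using less.hyps[of "V - C"] less.prems(1) by auto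
    have "\<not> R c b \<and> \<not> R b c" if "b \<in> K" for b
      using that K(1) assms(3)[of b c] by (auto simp: C_def)
    then have independent: "pairwise (\<lambda>a b. \<not> R a b) (insert c K)"
      using K(3) by (simp add: pairwise_insert)
    have "c \<notin> K" "finite K" using K(1) C(1) less.prems(1) finite_subset by auto
    then have "card V \<le> card (insert c K) * M" using card_V K(2) C(4) by simp
    then show ?thesis using independent K(1) c by (intro exI[of _ "insert c K"]) auto
  qed simp
qed

lemma exists_disjoint_graph_balls:
  assumes "regular_graph d n E"
  shows "\<exists>K\<subseteq>{0..<n}. n \<le> card K * ball_card_bound d t ^ 2
           \<and> pairwise (\<lambda>a b. disjnt (graph_ball n E a t) (graph_ball n E b t)) K"
proof -
  let ?B = "\<lambda>c. graph_ball n E c t"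
  have "\<exists>K\<subseteq>{0..<n}. card {0..<n} \<le> card K * ball_card_bound d t ^ 2
          \<and> pairwise (\<lambda>a b. \<not> \<not> disjnt (?B a) (?B b)) K"
  proof (rule greedy_independent_subset)
    show "\<not> disjnt (?B c) (?B c)" for c
      using graph_ball_center[of c n E t] by (auto simp: disjnt_def)
    show "\<not> disjnt (?B b) (?B a)" if "\<not> disjnt (?B a) (?B b)" for a b
      using that disjnt_sym by blast
  next
    fix c assume "c \<in> {0..<n}"
    then have c: "c < n" by simp
    have simple: "simple_graph_on n E" using assms by (simp add: regular_graph_def)
    have "{v\<in>{0..<n}. \<not> disjnt (?B c) (?B v)} \<subseteq> (\<Union>x\<in>?B c. ?B x)"
      using graph_ball_sym[OF simple] by (fastforce simp: disjnt_def)
    then have "card {v\<in>{0..<n}. \<not> disjnt (?B c) (?B v)} \<le> card (\<Union>x\<in>?B c. ?B x)"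
      by (intro card_mono) (auto simp: finite_graph_ball)
    also have "\<dots> \<le> (\<Sum>x\<in>?B c. card (?B x))"
      by (intro card_UN_le finite_graph_ball)
    also have "\<dots> \<le> (\<Sum>x\<in>?B c. ball_card_bound d t)"
      using graph_ball_subset[OF c, of E t] by (intro sum_mono card_graph_ball_le[OF assms]) auto
    also have "\<dots> \<le> ball_card_bound d t ^ 2"
      using card_graph_ball_le[OF assms c] by (simp add: power2_eq_square)
    finally show "card {v\<in>{0..<n}. \<not> disjnt (?B c) (?B v)} \<le> ball_card_bound d t ^ 2" .
  qed simp
  then show ?thesis by simp
qed

section \<open>The probability of complete activation\<close>

lemma seed_prob_complete_le_exp:
  assumes "r \<ge> 1" "K \<subseteq> {0..<n}" "pairwise (\<lambda>a b. disjnt (graph_ball n E a t) (graph_ball n E b t)) K"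
    and "\<forall>v<n. 0 \<le> p v \<and> p v \<le> 1"
    and "0 \<le> q" "q \<le> 1" "\<forall>c\<in>K. q \<le> (\<Prod>u\<in>graph_ball n E c t. 1 - p u)"
  shows "seed_prob n p (\<lambda>A0. bp_gen n E r t A0 = {0..<n}) \<le> exp (- q * card K)"
proof -
  let ?B = "\<lambda>c. graph_ball n E c t"
  have finK: "finite K" using assms(2) finite_subset by blast
  have balls: "?B c \<subseteq> {0..<n}" if "c \<in> K" for c
    using that assms(2) by (intro graph_ball_subset) auto
  have "seed_prob n p (\<lambda>A0. bp_gen n E r t A0 = {0..<n}) \<le> indep_prob {0..<n} p (\<lambda>S. \<forall>c\<in>K. S \<inter> ?B c \<noteq> {})"
    unfolding seed_prob_eq_indep_prob
  proof (rule indep_prob_mono)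
    show "0 \<le> p v \<and> p v \<le> 1" if "v \<in> {0..<n}" for v
      using that assms(4) by simp
    fix S assume complete: "bp_gen n E r t S = {0..<n}"
    show "\<forall>c\<in>K. S \<inter> ?B c \<noteq> {}"
    proof
      fix c assume "c \<in> K"
      then have "c \<in> bp_gen n E r t S" using complete assms(2) by auto
      then show "S \<inter> ?B c \<noteq> {}" by (rule bp_gen_meets_seeds[OF assms(1)])
    qed
  qed
  also have "\<dots> = (\<Prod>c\<in>K. 1 - (\<Prod>u\<in>?B c. 1 - p u))"
    using balls by (intro indep_prob_hits_disjoint_blocks[OF finK _ _ assms(3)]) auto
  also have "\<dots> \<le> (\<Prod>c\<in>K. 1 - q)"
  proof (rule prod_mono)
    fix c assume c: "c \<in> K"
    have "(\<Prod>u\<in>?B c. 1 - p u) \<le> 1"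
      using balls[OF c] assms(4) by (intro prod_le_1) auto
    then show "0 \<le> 1 - (\<Prod>u\<in>?B c. 1 - p u) \<and> 1 - (\<Prod>u\<in>?B c. 1 - p u) \<le> 1 - q"
      using assms(7) c by auto
  qed
  also have "\<dots> \<le> exp (- q) ^ card K"
    using assms(6) exp_ge_add_one_self[of "- q"] by (simp add: power_mono)
  also have "\<dots> = exp (- q * card K)"
    by (simp add: exp_of_nat_mult[symmetric] mult.commute)
  finally show ?thesis .
qed

lemma pow_floor_log_le:
  assumes "b \<ge> 2" "L \<ge> 1"
  shows "real b ^ nat \<lfloor>log b L\<rfloor> \<le> L"
proof -
  have "0 \<le> \<lfloor>log b L\<rfloor>" using assms by simp
  then have "real b ^ nat \<lfloor>log b L\<rfloor> = real b powr \<lfloor>log b L\<rfloor>"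
    using assms(1) by (simp add: powr_realpow[symmetric])
  also have "\<dots> \<le> L"
    using floor_log_eq_powr_iff[of L b "\<lfloor>log b L\<rfloor>"] assms by simp
  finally show ?thesis .
qed

lemma ball_card_bound_floor_log_le:
  assumes "d \<ge> 2" "L \<ge> 1"
  shows "real (ball_card_bound d (nat \<lfloor>log d L\<rfloor>)) \<le> 2 * L"
proof -
  have "real (ball_card_bound d (nat \<lfloor>log d L\<rfloor>)) \<le> real (2 * d ^ nat \<lfloor>log d L\<rfloor>)"
    using ball_card_bound_le[OF assms(1)] by (simp only: of_nat_le_iff)
  also have "\<dots> \<le> 2 * L"
    using pow_floor_log_le[OF assms] by simp
  finally show ?thesis .
qed

lemma powr_card_le_prod_one_minus:
  assumes "finite A" "real (card A) \<le> m" "\<forall>u\<in>A. 0 \<le> p u \<and> p u \<le> 1 - a" "0 < a" "a \<le> 1"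
  shows "a powr m \<le> (\<Prod>u\<in>A. 1 - p u)"
proof -
  have "a powr m \<le> a powr card A"
    using assms(2,4,5) by (intro powr_mono') auto
  also have "\<dots> = (\<Prod>u\<in>A. a)" using assms(4) by (simp add: powr_realpow)
  also have "\<dots> \<le> (\<Prod>u\<in>A. 1 - p u)"
    using assms(3,4) by (intro prod_mono) auto
  finally show ?thesis .
qed

lemma powr_neg_nine_tenths_le:
  assumes "n \<ge> 1"
  shows "n powr (-9/10) \<le> (3/4) powr (2 * log 2 n)"
proof -
  define L where "L = log 2 n"
  have "L \<ge> 0" "n = 2 powr L" using assms by (simp_all add: L_def)
  from this(2) have "n powr (-9/10) = (2 powr (-9)) powr (L/10)"
    by (simp add: powr_powr mult.commute)
  also have "\<dots> \<le> ((3/4) powr 20) powr (L/10)"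
    \<comment> \<open>2^(-9) \<approx> 0.00195 and (3/4)^20 \<approx> 0.00317\<close>
    using \<open>L \<ge> 0\<close> by (intro powr_mono2) (auto simp: powr_minus powr_realpow power_divide)
  also have "\<dots> = (3/4) powr (2 * L)" unfolding powr_powr by simp
  finally show ?thesis by (simp add: L_def)
qed

lemma seed_prob_complete_le:
  fixes d r n :: nat
  assumes "d \<ge> 2" "r \<ge> 1" "n \<ge> 2" "regular_graph d n E" "\<forall>v<n. 0 \<le> p v \<and> p v \<le> 1/4"
  shows "seed_prob n p (\<lambda>A0. bp_gen n E r (nat \<lfloor>log d (log 2 n)\<rfloor>) A0 = {0..<n})
         \<le> exp (- (real n powr (1/10) / (4 * (log 2 n)\<^sup>2)))"
proof -
  define L where "L = log 2 (real n)"
  define t where "t = nat \<lfloor>log d L\<rfloor>"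
  define q where "q = (3/4 :: real) powr (2 * L)"
  have L1: "L \<ge> 1" using assms(3) by (simp add: L_def)
  have ball_size: "real (ball_card_bound d t) \<le> 2 * L"
    unfolding t_def using assms(1) L1 by (rule ball_card_bound_floor_log_le)
  obtain K where K: "K \<subseteq> {0..<n}" "n \<le> card K * ball_card_bound d t ^ 2"
      "pairwise (\<lambda>a b. disjnt (graph_ball n E a t) (graph_ball n E b t)) K"
    using exists_disjoint_graph_balls[OF assms(4)] by blast
  have "real n \<le> card K * real (ball_card_bound d t) ^ 2"
    using K(2) by (metis of_nat_le_iff of_nat_mult of_nat_power)
  also have "\<dots> \<le> card K * (2 * L) ^ 2"
    using ball_size by (intro mult_left_mono power_mono) auto
  finally have card_K: "real n / (4 * L\<^sup>2) \<le> card K"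
    using L1 by (simp add: divide_le_eq power_mult_distrib mult.commute)
  have "q \<le> (\<Prod>u\<in>graph_ball n E c t. 1 - p u)" if "c \<in> K" for c
  proof -
    have c: "c < n" using that K(1) by auto
    show ?thesis unfolding q_def
    proof (intro powr_card_le_prod_one_minus finite_graph_ball)
      show "real (card (graph_ball n E c t)) \<le> 2 * L"
        using card_graph_ball_le[OF assms(4) c, of t] ball_size by (meson of_nat_le_iff order_trans)
      show "\<forall>u\<in>graph_ball n E c t. 0 \<le> p u \<and> p u \<le> 1 - 3/4"
        using graph_ball_subset[OF c, of E t] assms(5) by auto
    qed auto
  qed
  then have complete: "seed_prob n p (\<lambda>A0. bp_gen n E r t A0 = {0..<n}) \<le> exp (- q * card K)"
    using assms K L1 by (intro seed_prob_complete_le_exp) (auto simp: q_def powr_le1)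
  have "real n powr (1/10) / (4 * L\<^sup>2) = real n powr (-9/10) * (real n / (4 * L\<^sup>2))"
    using powr_mult_base[of "real n" "-9/10"] by (simp add: mult.commute)
  also have "\<dots> \<le> q * card K"
    using powr_neg_nine_tenths_le[of n] assms(3) card_K L1
    by (intro mult_mono) (auto simp: q_def L_def)
  finally have "exp (- q * card K) \<le> exp (- (real n powr (1/10) / (4 * L\<^sup>2)))"
    by simp
  with complete show ?thesis unfolding t_def L_def by linarith
qed

theorem proposition1:
  fixes d r :: nat
  assumes "d \<ge> 2" and "r \<ge> 2"
  shows "\<forall>\<epsilon>>0. \<exists>N. \<forall>n\<ge>N. \<forall>E p.
           regular_graph d n E \<longrightarrow> (\<forall>v<n. 0 \<le> p v \<and> p v \<le> 1/4) \<longrightarrow>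
           seed_prob n p (\<lambda>A0. bp_gen n E r (nat \<lfloor>log (real d) (log 2 (real n))\<rfloor>) A0 = {0..<n})
             \<le> \<epsilon>"
proof (intro allI impI)
  fix \<epsilon> :: real assume "\<epsilon> > 0"
  have "((\<lambda>x::real. exp (- (x powr (1/10) / (4 * (log 2 x)\<^sup>2)))) \<longlongrightarrow> 0) at_top"
    by real_asymp
  then have "eventually (\<lambda>x::real. exp (- (x powr (1/10) / (4 * (log 2 x)\<^sup>2))) < \<epsilon>) at_top"
    using \<open>\<epsilon> > 0\<close> by (rule order_tendstoD(2))
  then obtain N0 :: real where N0: "\<And>x. x \<ge> N0 \<Longrightarrow> exp (- (x powr (1/10) / (4 * (log 2 x)\<^sup>2))) < \<epsilon>"
    by (auto simp: eventually_at_top_linorder)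
  show "\<exists>N. \<forall>n\<ge>N. \<forall>E p. regular_graph d n E \<longrightarrow> (\<forall>v<n. 0 \<le> p v \<and> p v \<le> 1/4) \<longrightarrow>
           seed_prob n p (\<lambda>A0. bp_gen n E r (nat \<lfloor>log (real d) (log 2 (real n))\<rfloor>) A0 = {0..<n}) \<le> \<epsilon>"
  proof (intro exI allI impI)
    fix n E p
    assume "max 2 (nat \<lceil>N0\<rceil>) \<le> n" "regular_graph d n E" "\<forall>v<n. 0 \<le> p v \<and> p v \<le> (1/4 :: real)"
    with assms seed_prob_complete_le[of d r n E p] N0[of n]
    show "seed_prob n p (\<lambda>A0. bp_gen n E r (nat \<lfloor>log (real d) (log 2 (real n))\<rfloor>) A0 = {0..<n}) \<le> \<epsilon>"
      by fastforce
  qed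
qed

end
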